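(* Let $(X,p)$ be an allocation with prices satisfying: $p(e)=k$ for every $e\in M^+$ and $p(e)=1$ for every $e\in M^-$; $(X,p)$ is an equilibrium with $\alpha_i=1$ for all $i\in N$; and for every MBB path $i_0\to\cdots\to i_s$ ($s\ge1$) and every $e\in X_{i_s}$, $\frac{v_{i_s}(X_{i_s}\setminus\{e\})}{w_{i_s}}\le\frac{v_{i_0}(X_{i_0})}{w_{i_0}}$. Define agent groups as follows: set $N'=N$, $R=0$; while $N'\neq\emptyset$, let $\ell\in\arg\min_{i\in N'}v_i(X_i)/w_i$ (smallest index on ties), increase $R$ by $1$, let $N_R$ be the set of agents of $N'$ reachable from $\ell$ by a directed path in the MBB graph (including $\ell$), and set $N'\leftarrow N'\setminus N_R$. Then: (1) for all $i\in N_r$, $j\in N_{r'}$ with $r<r'$, we have $v_i(e)=1$ for every $e\in X_j$; (2) $M^-\subseteq\bigcup_{i\in N_1}X_i$; (3) for every $r$, the group $N_r$ is WEQX: for all $i,j\in N_r$ and $e\in X_j$, $\frac{v_i(X_i)}{w_i}\ge\frac{v_j(X_j\setminus\{e\})}{w_j}$.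
   Context: Bivalued instance: agents $N$, goods $M$, additive valuations with $v_i(e)\in\{1,k\}$, $k>1$, weights $w_i>0$ summing to $1$. $M^-=\{e\in M:v_i(e)=1\ \forall i\in N\}$ and $M^+=M\setminus M^-$. Prices $p(e)>0$; $\alpha_{i,e}=v_i(e)/p(e)$, $\alpha_i=\max_e\alpha_{i,e}$, $\mathrm{MBB}_i=\{e:\alpha_{i,e}=\alpha_i\}$; $(X,p)$ is an equilibrium if $X_i\subseteq\mathrm{MBB}_i$ for all $i$. The MBB graph is the directed graph on $N$ with edge $i\to j$ iff $\mathrm{MBB}_i\cap X_j\ne\emptyset$. *)

theory Defs
  imports Complex_Main
begin

text \<open>Agents are natural numbers (so that "smallest index" makes sense); goods have an arbitrary type.\<close>

definition val :: "(nat \<Rightarrow> 'g \<Rightarrow> real) \<Rightarrow> nat \<Rightarrow> 'g set \<Rightarrow> real" where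
  "val v i S = (\<Sum>e\<in>S. v i e)"

definition Mminus :: "nat set \<Rightarrow> 'g set \<Rightarrow> (nat \<Rightarrow> 'g \<Rightarrow> real) \<Rightarrow> 'g set" where
  "Mminus N M v = {e \<in> M. \<forall>i\<in>N. v i e = 1}"

definition Mplus :: "nat set \<Rightarrow> 'g set \<Rightarrow> (nat \<Rightarrow> 'g \<Rightarrow> real) \<Rightarrow> 'g set" where
  "Mplus N M v = M - Mminus N M v"

definition alpha :: "'g set \<Rightarrow> (nat \<Rightarrow> 'g \<Rightarrow> real) \<Rightarrow> ('g \<Rightarrow> real) \<Rightarrow> nat \<Rightarrow> real" where
  "alpha M v p i = Max ((\<lambda>e. v i e / p e) ` M)"

definition MBB :: "'g set \<Rightarrow> (nat \<Rightarrow> 'g \<Rightarrow> real) \<Rightarrow> ('g \<Rightarrow> real) \<Rightarrow> nat \<Rightarrow> 'g set" where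
  "MBB M v p i = {e \<in> M. v i e / p e = alpha M v p i}"

definition equilibrium :: "nat set \<Rightarrow> 'g set \<Rightarrow> (nat \<Rightarrow> 'g \<Rightarrow> real) \<Rightarrow> ('g \<Rightarrow> real) \<Rightarrow> (nat \<Rightarrow> 'g set) \<Rightarrow> bool" where
  "equilibrium N M v p X \<longleftrightarrow> (\<forall>i\<in>N. X i \<subseteq> MBB M v p i)"

definition mbb_edges :: "nat set \<Rightarrow> 'g set \<Rightarrow> (nat \<Rightarrow> 'g \<Rightarrow> real) \<Rightarrow> ('g \<Rightarrow> real) \<Rightarrow> (nat \<Rightarrow> 'g set) \<Rightarrow> (nat \<times> nat) set" where
  "mbb_edges N M v p X = {(i, j). i \<in> N \<and> j \<in> N \<and> MBB M v p i \<inter> X j \<noteq> {}}"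

text \<open>Group construction.  f is the key v_i(X_i)/w_i, E the edge relation.\<close>
definition leader :: "(nat \<Rightarrow> real) \<Rightarrow> nat set \<Rightarrow> nat" where
  "leader f S = (LEAST l. l \<in> S \<and> (\<forall>i\<in>S. f l \<le> f i))"

definition reach_group :: "(nat \<times> nat) set \<Rightarrow> (nat \<Rightarrow> real) \<Rightarrow> nat set \<Rightarrow> nat set" where
  "reach_group E f S = {j \<in> S. (leader f S, j) \<in> E\<^sup>*}"

primrec remaining :: "(nat \<times> nat) set \<Rightarrow> (nat \<Rightarrow> real) \<Rightarrow> nat set \<Rightarrow> nat \<Rightarrow> nat set" where
  "remaining E f N0 0 = N0"
| "remaining E f N0 (Suc r) = remaining E f N0 r - reach_group E f (remaining E f N0 r)"

text \<open>Groups are 1-indexed as in the paper: group r (r >= 1) is built in round r.\<close>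
definition agent_group :: "(nat \<times> nat) set \<Rightarrow> (nat \<Rightarrow> real) \<Rightarrow> nat set \<Rightarrow> nat \<Rightarrow> nat set" where
  "agent_group E f N0 r = (if r = 0 then {} else reach_group E f (remaining E f N0 (r - 1)))"

definition num_groups :: "(nat \<times> nat) set \<Rightarrow> (nat \<Rightarrow> real) \<Rightarrow> nat set \<Rightarrow> nat" where
  "num_groups E f N0 = (LEAST R. remaining E f N0 R = {})"

end

theory Submission
  imports Defs
begin

text \<open>With alpha_i = 1 and prices equal to k on M+ and 1 on M-, every agent i has an MBB edge
  to the owner of each good i values at k and of each good in M-.  A group N_r is closed under
  MBB edges into the agents still remaining in round r, and all later groups consist of such
  agents; so no agent of N_r values a good of a later group at k, and the first leader has an
  edge to every owner of a good in M-.  For WEQX, the leader l of N_r has the smallest key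
  v_l(X_l)/w_l among the remaining agents and reaches every j in N_r: the path condition (or
  monotonicity of v_j, if j = l) bounds v_j(X_j - {e})/w_j by the key of l, hence by the key of
  every i in N_r.\<close>

lemma leader_minimal:
  fixes f :: "nat \<Rightarrow> real"
  assumes "finite S" "S \<noteq> {}"
  shows "leader f S \<in> S" "\<forall>i\<in>S. f (leader f S) \<le> f i"
proof -
  have "\<exists>l. l \<in> S \<and> (\<forall>i\<in>S. f l \<le> f i)"
    using arg_min_if_finite[OF assms, of f] by (meson not_le)
  then have "leader f S \<in> S \<and> (\<forall>i\<in>S. f (leader f S) \<le> f i)"
    unfolding leader_def by (rule LeastI_ex)
  then show "leader f S \<in> S" "\<forall>i\<in>S. f (leader f S) \<le> f i" by blast+
qed

lemma reach_group_subset: "reach_group E f S \<subseteq> S"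
  unfolding reach_group_def by blast

lemma reach_group_closed:
  assumes "i \<in> reach_group E f S" "(i, j) \<in> E" "j \<in> S"
  shows "j \<in> reach_group E f S"
  using assms unfolding reach_group_def by (blast intro: rtrancl_into_rtrancl)

lemma remaining_subset: "remaining E f N0 r \<subseteq> N0"
  by (induction r) auto

lemma remaining_antimono: "r \<le> r' \<Longrightarrow> remaining E f N0 r' \<subseteq> remaining E f N0 r"
  by (rule lift_Suc_antimono_le[of "remaining E f N0"]) auto

lemma agent_group_Suc: "agent_group E f N0 (Suc r) = reach_group E f (remaining E f N0 r)"
  unfolding agent_group_def by simp

lemma agent_group_mem_Suc_index:
  assumes "j \<in> agent_group E f N0 r"
  obtains q where "r = Suc q"
  using assms unfolding agent_group_def by (cases r) auto

lemma agent_group_subset_remaining: "r < r' \<Longrightarrow> agent_group E f N0 r' \<subseteq> remaining E f N0 r"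
  using remaining_antimono[of r "r' - 1" E f N0] reach_group_subset
  unfolding agent_group_def by fastforce

lemma agent_group_subset: "agent_group E f N0 r \<subseteq> N0"
  unfolding agent_group_def using reach_group_subset remaining_subset by (simp, blast)

lemma agent_group_no_forward_edge:
  assumes "r < r'" "i \<in> agent_group E f N0 r" "j \<in> agent_group E f N0 r'"
  shows "(i, j) \<notin> E"
proof
  assume ij: "(i, j) \<in> E"
  obtain q where r: "r = Suc q" using assms(2) by (rule agent_group_mem_Suc_index)
  let ?S = "remaining E f N0 q"
  have "j \<in> remaining E f N0 r" using assms(1,3) agent_group_subset_remaining by blast
  then have "j \<in> ?S" "j \<notin> reach_group E f ?S" using r by simp_all
  moreover have "i \<in> reach_group E f ?S" using assms(2) r agent_group_Suc by simp
  ultimately show False using ij reach_group_closed by blast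
qed

lemma agent_group_leader:
  fixes f :: "nat \<Rightarrow> real"
  assumes "finite N0" "j \<in> agent_group E f N0 r"
  obtains l where "(l, j) \<in> E\<^sup>*" "\<forall>i\<in>agent_group E f N0 r. f l \<le> f i"
proof -
  obtain q where "r = Suc q" using assms(2) by (rule agent_group_mem_Suc_index)
  define S where "S = remaining E f N0 q"
  have group: "agent_group E f N0 r = reach_group E f S"
    unfolding S_def \<open>r = Suc q\<close> by (rule agent_group_Suc)
  have "finite S" unfolding S_def using remaining_subset assms(1) by (rule finite_subset)
  moreover have "S \<noteq> {}" using assms(2) reach_group_subset unfolding group by blast
  ultimately have "\<forall>i\<in>S. f (leader f S) \<le> f i" by (rule leader_minimal)
  then have "\<forall>i\<in>agent_group E f N0 r. f (leader f S) \<le> f i"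
    using reach_group_subset unfolding group by blast
  moreover have "(leader f S, j) \<in> E\<^sup>*" using assms(2) unfolding group reach_group_def by blast
  ultimately show thesis using that by blast
qed

lemma first_agent_group_mem:
  assumes "finite N0" "j \<in> N0" "\<forall>i\<in>N0. (i, j) \<in> E"
  shows "j \<in> agent_group E f N0 1"
proof -
  have "leader f N0 \<in> N0" using assms(1,2) leader_minimal by blast
  then show ?thesis using assms unfolding agent_group_def reach_group_def by auto
qed

lemma agent_group_ancestor_bound:
  fixes f :: "nat \<Rightarrow> real"
  assumes "finite N0" "i \<in> agent_group E f N0 r" "j \<in> agent_group E f N0 r"
    and ancestors: "\<And>l. (l, j) \<in> E\<^sup>* \<Longrightarrow> c \<le> f l"
  shows "c \<le> f i"
proof -
  obtain l where "(l, j) \<in> E\<^sup>*" and "\<forall>i\<in>agent_group E f N0 r. f l \<le> f i"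
    using assms(1,3) by (rule agent_group_leader)
  then show ?thesis using ancestors assms(2) by (meson order_trans)
qed

lemma val_remove_div_le:
  assumes "finite A" "\<forall>x\<in>A. 0 \<le> v i x" "0 < c"
  shows "val v i (A - {e}) / c \<le> val v i A / c"
proof -
  have "val v i (A - {e}) \<le> val v i A"
    unfolding val_def using assms(1,2) by (intro sum_mono2) auto
  then show ?thesis using assms(3) by (simp add: divide_right_mono)
qed

lemma value_eq_1_if_not_mbb_edge:
  assumes "k > 1" "\<forall>i\<in>N. \<forall>e\<in>M. v i e = 1 \<or> v i e = k" "\<forall>e\<in>Mplus N M v. p e = k"
    and "alpha M v p i = 1" "i \<in> N" "j \<in> N" "X j \<subseteq> M" "e \<in> X j"
    and "(i, j) \<notin> mbb_edges N M v p X"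
  shows "v i e = 1"
proof (rule ccontr)
  assume ne: "v i e \<noteq> 1"
  have "e \<in> M" using assms(7,8) by blast
  then have "e \<in> Mplus N M v" using ne assms(5) unfolding Mplus_def Mminus_def by blast
  then have "v i e = k" "p e = k" using ne assms(2,3,5) \<open>e \<in> M\<close> by blast+
  then have "(i, j) \<in> mbb_edges N M v p X"
    using assms(1,4-6,8) \<open>e \<in> M\<close> unfolding mbb_edges_def MBB_def by auto
  with assms(9) show False by contradiction
qed

lemma mbb_edge_if_Mminus:
  assumes "\<forall>e\<in>Mminus N M v. p e = 1" "alpha M v p i = 1"
    and "i \<in> N" "j \<in> N" "e \<in> X j" "e \<in> Mminus N M v"
  shows "(i, j) \<in> mbb_edges N M v p X"
proof -
  have "e \<in> M" "v i e = 1" "p e = 1" using assms(1,3,6) unfolding Mminus_def by auto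
  then show ?thesis using assms(2-5) unfolding mbb_edges_def MBB_def by auto
qed

theorem lemma4p2:
  fixes N :: "nat set" and M :: "'g set" and v :: "nat \<Rightarrow> 'g \<Rightarrow> real"
    and k :: real and w :: "nat \<Rightarrow> real" and p :: "'g \<Rightarrow> real" and X :: "nat \<Rightarrow> 'g set"
  assumes finN: "finite N" and finM: "finite M"
    and k_gt: "k > 1"
    and bival: "\<forall>i\<in>N. \<forall>e\<in>M. v i e = 1 \<or> v i e = k"
    and w_pos: "\<forall>i\<in>N. w i > 0" and w_sum: "(\<Sum>i\<in>N. w i) = 1"
    and X_sub: "\<forall>i\<in>N. X i \<subseteq> M"
    and X_disj: "\<forall>i\<in>N. \<forall>j\<in>N. i \<noteq> j \<longrightarrow> X i \<inter> X j = {}"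
    and X_cover: "(\<Union>i\<in>N. X i) = M"
    and p_plus: "\<forall>e\<in>Mplus N M v. p e = k"
    and p_minus: "\<forall>e\<in>Mminus N M v. p e = 1"
    and eq: "equilibrium N M v p X"
    and alpha1: "\<forall>i\<in>N. alpha M v p i = 1"
    and path_cond: "\<forall>i0 is. (i0, is) \<in> (mbb_edges N M v p X)\<^sup>+ \<longrightarrow>
        (\<forall>e\<in>X is. val v is (X is - {e}) / w is \<le> val v i0 (X i0) / w i0)"
  defines "E \<equiv> mbb_edges N M v p X"
    and "f \<equiv> (\<lambda>i. val v i (X i) / w i)"
  shows "(\<forall>r r'. 1 \<le> r \<and> r < r' \<and> r' \<le> num_groups E f N \<longrightarrow>
            (\<forall>i\<in>agent_group E f N r. \<forall>j\<in>agent_group E f N r'. \<forall>e\<in>X j. v i e = 1))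
       \<and> Mminus N M v \<subseteq> (\<Union>i\<in>agent_group E f N 1. X i)
       \<and> (\<forall>r. 1 \<le> r \<and> r \<le> num_groups E f N \<longrightarrow>
            (\<forall>i\<in>agent_group E f N r. \<forall>j\<in>agent_group E f N r. \<forall>e\<in>X j.
               val v i (X i) / w i \<ge> val v j (X j - {e}) / w j))"
proof -
  have forward: "v i e = 1"
    if "r < r'" "i \<in> agent_group E f N r" "j \<in> agent_group E f N r'" "e \<in> X j" for r r' i j e
  proof -
    have ij: "i \<in> N" "j \<in> N" using that(2,3) agent_group_subset by blast+
    have "(i, j) \<notin> mbb_edges N M v p X"
      using agent_group_no_forward_edge that(1-3) unfolding E_def by blast
    with ij show ?thesis
      using value_eq_1_if_not_mbb_edge[OF k_gt bival p_plus] alpha1 X_sub that(4) by blast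
  qed
  have cover: "Mminus N M v \<subseteq> (\<Union>i\<in>agent_group E f N 1. X i)"
  proof
    fix e assume e: "e \<in> Mminus N M v"
    then obtain j where j: "j \<in> N" "e \<in> X j" using X_cover unfolding Mminus_def by blast
    have "(i, j) \<in> E" if "i \<in> N" for i
      unfolding E_def using p_minus alpha1[rule_format, OF that] that j e by (rule mbb_edge_if_Mminus)
    then have "j \<in> agent_group E f N 1" using first_agent_group_mem finN j(1) by blast
    then show "e \<in> (\<Union>i\<in>agent_group E f N 1. X i)" using j(2) by blast
  qed
  have weqx: "val v j (X j - {e}) / w j \<le> val v i (X i) / w i"
    if i: "i \<in> agent_group E f N r" and j: "j \<in> agent_group E f N r" and e: "e \<in> X j" for r i j e
  proof -
    have jN: "j \<in> N" using j agent_group_subset by blast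
    have "val v j (X j - {e}) / w j \<le> f l" if "(l, j) \<in> E\<^sup>*" for l
    proof (cases "l = j")
      case True
      have "finite (X j)" using X_sub jN finM by (meson finite_subset)
      moreover have "\<forall>x\<in>X j. 0 \<le> v j x" using X_sub jN bival k_gt by force
      ultimately show ?thesis unfolding f_def True using w_pos jN by (simp add: val_remove_div_le)
    next
      case False
      then have "(l, j) \<in> E\<^sup>+" using that by (meson rtranclD)
      then show ?thesis using path_cond e unfolding E_def f_def by blast
    qed
    then have "val v j (X j - {e}) / w j \<le> f i" by (rule agent_group_ancestor_bound[OF finN i j])
    then show ?thesis unfolding f_def by simp
  qed
  show ?thesis using forward cover weqx by blast
qed

end
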